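(* Let $(\mathbb{Z},H^+)$ be a simple component with $N_H$ the unique element of $H^+$ such that $N_H-1\notin H^+$ and $N_H+k\in H^+$ for all $k\in\mathbb{Z}^+$. Let $a\in\mathbb{N}$ and $p,c,d\in\mathbb{N}$ with $\gcd(a,p)=\gcd(a,c)=\gcd(c,d)=1$, $pc\equiv pd\equiv1\pmod a$, $p\in H^+$, $pc>aN_H$, $d>\max\{(a-1)pc+a(N_H-1),ac\}$, and let $G^+=aH^++p\langle c,d\rangle$, so that $(\mathbb{Z},G^+)$ is a simple component. Let $N_G$ be the unique element of $G^+$ with $N_G-1\notin G^+$ and $N_G+k\in G^+$ for all $k\in\mathbb{Z}^+$. Then $N_G=(a-1)pc+a(N_H-1)+1$.
   Context: A simple component is a simple partially ordered abelian group $(\mathbb{Z},P)$ (every nonzero element of $P$ is an order-unit). $\langle c,d\rangle$ is the submonoid of $\mathbb{Z}^+$ generated by $c,d$, and $aH^++p\langle c,d\rangle=\{ah+pz: h\in H^+, z\in\langle c,d\rangle\}$. *)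

theory Defs
  imports Main
begin

text \<open>A partially ordered abelian group structure on the integers is given by its
positive cone P: 0 in P, P + P contained in P, and P intersect -P = {0}.\<close>
definition po_cone :: "int set \<Rightarrow> bool" where
  "po_cone P \<longleftrightarrow> 0 \<in> P \<and> (\<forall>x\<in>P. \<forall>y\<in>P. x + y \<in> P) \<and> (\<forall>x. x \<in> P \<and> - x \<in> P \<longrightarrow> x = 0)"

definition order_unit :: "int set \<Rightarrow> int \<Rightarrow> bool" where
  "order_unit P u \<longleftrightarrow> u \<in> P \<and> (\<forall>x::int. \<exists>n::nat. int n * u - x \<in> P)"

definition simple_component :: "int set \<Rightarrow> bool" where
  "simple_component P \<longleftrightarrow> po_cone P \<and> (\<forall>u\<in>P. u \<noteq> 0 \<longrightarrow> order_unit P u)"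

text \<open>Z^+ = nonnegative integers; the submonoid of Z^+ generated by c and d.\<close>
definition gen2 :: "int \<Rightarrow> int \<Rightarrow> int set" where
  "gen2 c d = {int m * c + int n * d | m n. True}"

definition combo :: "int \<Rightarrow> int set \<Rightarrow> int \<Rightarrow> int \<Rightarrow> int \<Rightarrow> int set" where
  "combo a H p c d = {a * h + p * z | h z. h \<in> H \<and> z \<in> gen2 c d}"

definition is_conductor :: "int set \<Rightarrow> int \<Rightarrow> bool" where
  "is_conductor P N \<longleftrightarrow> N \<in> P \<and> N - 1 \<notin> P \<and> (\<forall>k::int. k \<ge> 0 \<longrightarrow> N + k \<in> P)"

end

theory Submission
  imports Defs
begin

text \<open>Both cones consist of nonnegative integers, and a cone of nonnegative integers containing
  a tail \<open>[N, \<infinity>)\<close> is simple with conductor the least \<open>M\<close> such that \<open>[M, \<infinity>) \<subseteq> P\<close>.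
  Writing \<open>F = (a - 1) p c + a (N\<^sub>H - 1)\<close>, every \<open>n > F\<close> lies in \<open>G\<^sup>+\<close>: choose
  \<open>0 \<le> m < a\<close> with \<open>n \<equiv> m p c (mod a)\<close>, then \<open>n = a h + p (m c)\<close> with \<open>h \<ge> N\<^sub>H\<close>.
  Conversely \<open>F \<notin> G\<^sup>+\<close>: a representation may not use \<open>d > F\<close>, so \<open>F = a h + i p c\<close>;
  \<open>i \<ge> a\<close> is too large since \<open>p c > a N\<^sub>H\<close>, and \<open>i < a\<close> forces \<open>i = a - 1\<close> because \<open>p c\<close> is a
  unit mod \<open>a\<close>, whence \<open>h = N\<^sub>H - 1 \<notin> H\<^sup>+\<close>.\<close>

lemma po_cone_nat_mult:
  assumes "po_cone P" "x \<in> P"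
  shows "int n * x \<in> P"
proof (induction n)
  case 0
  then show ?case using assms(1) by (simp add: po_cone_def)
next
  case (Suc n)
  have "int (Suc n) * x = int n * x + x" by (simp add: algebra_simps)
  then show ?case using Suc assms unfolding po_cone_def by metis
qed

lemma po_cone_nonneg_of_tail:
  assumes cone: "po_cone P" and tail: "\<forall>n\<ge>N. n \<in> P" and "x \<in> P"
  shows "0 \<le> x"
proof (rule ccontr)
  assume "\<not> 0 \<le> x"
  define n where "n = nat \<bar>N\<bar> + 1"
  have "int n * x \<le> int n * (-1)"
    using \<open>\<not> 0 \<le> x\<close> by (intro mult_left_mono) auto
  then have neg: "int n * x \<le> - int n" by simp
  then have "- (int n * x) \<in> P" using tail unfolding n_def by auto
  moreover have "int n * x \<in> P" using po_cone_nat_mult[OF cone \<open>x \<in> P\<close>] .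
  ultimately have "int n * x = 0" using cone unfolding po_cone_def by blast
  with neg show False unfolding n_def by auto
qed

lemma is_conductor_tail:
  assumes "is_conductor P N" "N \<le> n"
  shows "n \<in> P"
  using assms unfolding is_conductor_def by (metis add.commute diff_add_cancel diff_ge_0_iff_ge)

lemma is_conductor_unique:
  assumes "is_conductor P N" and tail: "\<forall>n\<ge>M. n \<in> P" and "M - 1 \<notin> P"
  shows "N = M"
proof -
  have "\<not> N \<le> M - 1" using is_conductor_tail[OF assms(1)] \<open>M - 1 \<notin> P\<close> by blast
  moreover have "\<not> M \<le> N - 1" using assms(1) tail unfolding is_conductor_def by auto
  ultimately show ?thesis by linarith
qed

lemma simple_component_of_nonneg_tail:
  fixes P :: "int set"
  assumes "0 \<in> P" "\<forall>x\<in>P. \<forall>y\<in>P. x + y \<in> P" and nonneg: "\<forall>x\<in>P. 0 \<le> x"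
    and tail: "\<forall>n\<ge>N. n \<in> P"
  shows "simple_component P"
  unfolding simple_component_def
proof (intro conjI ballI impI)
  show "po_cone P" unfolding po_cone_def
  proof (intro conjI allI impI)
    fix x assume "x \<in> P \<and> - x \<in> P"
    then have "0 \<le> x" "0 \<le> - x" using nonneg by auto
    then show "x = 0" by simp
  qed (use assms(1,2) in auto)
  fix u assume "u \<in> P" "u \<noteq> 0"
  then have "1 \<le> u" using nonneg by force
  show "order_unit P u" unfolding order_unit_def
  proof (intro conjI allI)
    fix x :: int
    define n where "n = nat (\<bar>x\<bar> + \<bar>N\<bar>)"
    have "int n * 1 \<le> int n * u" using \<open>1 \<le> u\<close> by (intro mult_left_mono) auto
    then have "N \<le> int n * u - x" unfolding n_def by auto
    then show "\<exists>n. int n * u - x \<in> P" using tail by blast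
  qed fact
qed

lemma mem_combo_iff:
  "x \<in> combo a H p c d \<longleftrightarrow> (\<exists>h\<in>H. \<exists>i j. x = a * h + p * (int i * c + int j * d))"
  unfolding combo_def gen2_def by blast

lemma zero_mem_combo:
  assumes "0 \<in> H"
  shows "0 \<in> combo a H p c d"
  using assms unfolding mem_combo_iff by (intro bexI[of _ 0] exI[of _ 0]) auto

lemma combo_add_closed:
  assumes "\<forall>x\<in>H. \<forall>y\<in>H. x + y \<in> H"
  shows "\<forall>x\<in>combo a H p c d. \<forall>y\<in>combo a H p c d. x + y \<in> combo a H p c d"
proof (intro ballI)
  fix x y assume "x \<in> combo a H p c d" "y \<in> combo a H p c d"
  then obtain h i j h' i' j' where "h \<in> H" "h' \<in> H"
    and "x = a * h + p * (int i * c + int j * d)" "y = a * h' + p * (int i' * c + int j' * d)"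
    unfolding mem_combo_iff by blast
  then have "x + y = a * (h + h') + p * (int (i + i') * c + int (j + j') * d)" "h + h' \<in> H"
    using assms by (auto simp: algebra_simps)
  then show "x + y \<in> combo a H p c d" unfolding mem_combo_iff by blast
qed

lemma combo_nonneg:
  assumes "\<forall>h\<in>H. 0 \<le> h" "0 \<le> a" "0 \<le> p" "0 \<le> c" "0 \<le> d" "x \<in> combo a H p c d"
  shows "0 \<le> x"
  using assms unfolding mem_combo_iff by fastforce

lemma combo_tail:
  fixes a p c NH :: int
  assumes tail: "\<forall>h\<ge>NH. h \<in> H" and "0 \<in> H" and "0 \<le> a" "0 \<le> p" "0 \<le> c"
    and unit: "(p * c) mod a = 1 mod a"
    and n: "(a - 1) * p * c + a * (NH - 1) < n"
  shows "n \<in> combo a H p c d"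
proof (cases "a = 0")
  case True
  then have "p * c = 1" using unit by simp
  then have "n = a * 0 + p * (int (nat n) * c + int 0 * d)" using True n by (simp add: algebra_simps)
  then show ?thesis unfolding mem_combo_iff using \<open>0 \<in> H\<close> by blast
next
  case False
  define m where "m = n mod a"
  have m: "0 \<le> m" "m \<le> a - 1" unfolding m_def using False \<open>0 \<le> a\<close> by auto
  have "(m * (p * c)) mod a = n mod a"
    using unit unfolding m_def by (metis mod_mult_right_eq mult.right_neutral mod_mod_trivial)
  then obtain h where h: "n - m * (p * c) = a * h" by (metis mod_eq_dvd_iff dvdE)
  have "m * (p * c) \<le> (a - 1) * (p * c)"
    using m assms(4,5) by (intro mult_right_mono) auto
  then have "a * (NH - 1) < a * h" using h n by (simp add: algebra_simps)
  then have "h \<in> H" using tail \<open>0 \<le> a\<close> by (simp add: mult_less_cancel_left)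
  moreover have "n = a * h + p * (int (nat m) * c + int 0 * d)" using h m by (simp add: algebra_simps)
  ultimately show ?thesis unfolding mem_combo_iff by blast
qed

lemma combo_frobenius_not_mem:
  fixes a p c d NH :: int
  assumes nonneg: "\<forall>h\<in>H. 0 \<le> h" and "NH - 1 \<notin> H"
    and "0 \<le> a" "1 \<le> p" "1 \<le> c" "0 \<le> d"
    and unit: "(p * c) mod a = 1 mod a" and "coprime a (p * c)"
    and "a * NH < p * c" and "(a - 1) * p * c + a * (NH - 1) < d"
  shows "(a - 1) * p * c + a * (NH - 1) \<notin> combo a H p c d"
    (is "?F \<notin> _")
proof
  assume "?F \<in> combo a H p c d"
  then obtain h i j where "h \<in> H" and F: "?F = a * h + p * (int i * c + int j * d)"
    unfolding mem_combo_iff by blast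
  have "0 \<le> a * h" using nonneg \<open>h \<in> H\<close> \<open>0 \<le> a\<close> by simp
  have "j = 0"
  proof (rule ccontr)
    assume "j \<noteq> 0"
    then have "1 * d \<le> int i * c + int j * d" using assms(5,6) by (intro add_increasing mult_right_mono) auto
    also have "\<dots> \<le> p * (int i * c + int j * d)"
      using assms(4,6) calculation by (simp add: mult_le_cancel_right1)
    finally show False using F \<open>0 \<le> a * h\<close> assms(10) by linarith
  qed
  then have Fi: "?F = a * h + int i * (p * c)" using F by (simp add: algebra_simps)
  have "a \<noteq> 0"
  proof
    assume "a = 0"
    then show False using Fi unit \<open>0 \<le> a * h\<close> by simp
  qed
  show False
  proof (cases "int i \<le> a - 1")
    case True
    have "a * (h - (NH - 1)) = (a - 1 - int i) * (p * c)" using Fi by (simp add: algebra_simps)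
    then have "a dvd a - 1 - int i"
      using \<open>coprime a (p * c)\<close> by (metis dvd_triv_left coprime_dvd_mult_left_iff)
    then have "int i = a - 1" using True \<open>a \<noteq> 0\<close> zdvd_imp_le by fastforce
    then have "a * h = a * (NH - 1)" using Fi by (simp add: mult.assoc)
    then have "h = NH - 1" using \<open>a \<noteq> 0\<close> by simp
    then show False using \<open>h \<in> H\<close> \<open>NH - 1 \<notin> H\<close> by simp
  next
    case False
    have "a * (p * c) \<le> int i * (p * c)" using False assms(4,5) by (intro mult_right_mono) auto
    then have "a * h \<le> a * (NH - 1) - p * c" using Fi by (simp add: algebra_simps)
    then show False using \<open>0 \<le> a * h\<close> \<open>0 \<le> a\<close> \<open>a * NH < p * c\<close> by (simp add: algebra_simps)
  qed
qed

theorem corollary4p4: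
  fixes H :: "int set" and NH a p c d :: int
  assumes "simple_component H"
    and "is_conductor H NH"
    and "a \<ge> 0" and "p \<ge> 0" and "c \<ge> 0" and "d \<ge> 0"
    and "gcd a p = 1" and "gcd a c = 1" and "gcd c d = 1"
    and "(p * c) mod a = 1 mod a" and "(p * d) mod a = 1 mod a"
    and "p \<in> H"
    and "p * c > a * NH"
    and "d > max ((a - 1) * p * c + a * (NH - 1)) (a * c)"
  shows "simple_component (combo a H p c d)
         \<and> (\<forall>NG. is_conductor (combo a H p c d) NG \<longrightarrow> NG = (a - 1) * p * c + a * (NH - 1) + 1)"
proof -
  let ?G = "combo a H p c d" and ?F = "(a - 1) * p * c + a * (NH - 1)"
  have cone: "po_cone H" using assms(1) by (simp add: simple_component_def)
  have tailH: "\<forall>h\<ge>NH. h \<in> H" using is_conductor_tail[OF assms(2)] by blast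
  have nonnegH: "\<forall>h\<in>H. 0 \<le> h" using po_cone_nonneg_of_tail[OF cone tailH] by blast
  have "0 \<le> NH" using nonnegH assms(2) by (simp add: is_conductor_def)
  then have "0 < p * c" using \<open>p * c > a * NH\<close> \<open>0 \<le> a\<close> by (smt (verit) mult_nonneg_nonneg)
  then have "1 \<le> p" "1 \<le> c" using assms(4,5) by (auto simp: zero_less_mult_iff)
  have "0 \<in> H" "\<forall>x\<in>H. \<forall>y\<in>H. x + y \<in> H" using cone by (auto simp: po_cone_def)
  have tailG: "\<forall>n\<ge>?F + 1. n \<in> ?G"
    using combo_tail[OF tailH \<open>0 \<in> H\<close> assms(3-5,10)] by simp
  have "NH - 1 \<notin> H" using assms(2) by (simp add: is_conductor_def)
  have "coprime a (p * c)" using assms(7,8) by (metis coprime_iff_gcd_eq_1 coprime_mult_right_iff)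
  have "?F \<notin> ?G"
    using combo_frobenius_not_mem[OF nonnegH \<open>NH - 1 \<notin> H\<close> assms(3) \<open>1 \<le> p\<close> \<open>1 \<le> c\<close> assms(6,10)
        \<open>coprime a (p * c)\<close> assms(13)] assms(14) by simp
  have "simple_component ?G"
    using simple_component_of_nonneg_tail[OF zero_mem_combo combo_add_closed] tailG
      combo_nonneg[OF nonnegH assms(3-6)] \<open>0 \<in> H\<close> \<open>\<forall>x\<in>H. \<forall>y\<in>H. x + y \<in> H\<close> by blast
  moreover have "\<forall>NG. is_conductor ?G NG \<longrightarrow> NG = ?F + 1"
    using is_conductor_unique tailG \<open>?F \<notin> ?G\<close> by fastforce
  ultimately show ?thesis by blast
qed

end
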